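(* Let $m\ge 1$, $n=2m$, and let $g(x_0,\ldots,x_{n-1})$ be a reduced polynomial in $\mathbb{F}_2[x_0,\ldots,x_{n-1}]$ (equivalently a Boolean function on $\mathbb{F}_2^n$) such that: (1) for every $0\le i\le m-1$, $g$ is unchanged when the variables $x_i$ and $x_{i+m}$ are interchanged; (2) for every $0\le i\le m-1$, no monomial of $g$ (with nonzero coefficient) contains both $x_i$ and $x_{i+m}$; (3) $g$ is rotation symmetric, i.e. $g(x_1,\ldots,x_{n-1},x_0)=g(x_0,\ldots,x_{n-1})$. Then there exists a rotation symmetric polynomial $\gamma(X_0,\ldots,X_{m-1})\in\mathbb{F}_2[X_0,\ldots,X_{m-1}]$ (i.e. $\gamma(X_0,X_1,\ldots,X_{m-1})=\gamma(X_1,\ldots,X_{m-1},X_0)$) such that $$g(x_0,\ldots,x_{n-1})=\gamma(x_0+x_m,\,x_1+x_{m+1},\,\ldots,\,x_{m-1}+x_{2m-1}).$$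
   Context: A reduced polynomial in $\mathbb{F}_2[x_0,\ldots,x_{n-1}]$ is one of the form $\sum_{u\in\mathbb{F}_2^n}c_u\prod_{i}x_i^{u_i}$ (each variable with exponent at most 1); Boolean functions on $\mathbb{F}_2^n$ are identified with such polynomials (their algebraic normal form). *)

theory Defs
  imports Main "HOL-Combinatorics.Transposition"
begin

text \<open>A reduced polynomial over F_2 is represented by its algebraic normal form:
  the set of monomials with coefficient 1, each monomial being the set of indices
  of the variables occurring in it.\<close>

type_synonym rpoly = "nat set set"

definition is_rpoly :: "nat \<Rightarrow> rpoly \<Rightarrow> bool" where
  "is_rpoly n P \<longleftrightarrow> (\<forall>S\<in>P. S \<subseteq> {0..<n})"

definition rename_vars :: "(nat \<Rightarrow> nat) \<Rightarrow> rpoly \<Rightarrow> rpoly" where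
  "rename_vars f P = (\<lambda>S. f ` S) ` P"

definition rotation_symmetric :: "nat \<Rightarrow> rpoly \<Rightarrow> bool" where
  "rotation_symmetric n P \<longleftrightarrow> rename_vars (\<lambda>j. (j + 1) mod n) P = P"

text \<open>Evaluation over F_2 (True = 1, addition = xor): the value is the parity of the
  number of monomials all of whose variables are 1.\<close>
definition anf_eval :: "rpoly \<Rightarrow> (nat \<Rightarrow> bool) \<Rightarrow> bool" where
  "anf_eval P x \<longleftrightarrow> odd (card {S \<in> P. \<forall>i\<in>S. x i})"

end

theory Submission
  imports Defs "HOL-Library.FuncSet"
begin

text \<open>Fold the variable indices modulo m and let \<open>\<gamma>\<close> be the image of g.
  By the no-pair hypothesis every monomial S of g picks at most one variable from each pair
  x_j, x_(j+m), so it is a lift of its image T; by swap invariance the monomials of g over T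
  are closed under switching the choice in one pair, and since any two lifts of T differ by
  finitely many switches, g contains all of them. Hence g is the sum over T in \<open>\<gamma>\<close> of the
  products of x_j + x_(j+m) over j in T. Pointwise over F_2: the number of lifts of T whose
  variables are all 1 is the product over j in T of the number of i in {j, j+m} with x_i = 1,
  which is odd iff x_j \<noteq> x_(j+m) for all j in T. Rotation symmetry of \<open>\<gamma>\<close> holds because
  reduction modulo m commutes with the rotations modulo 2m and modulo m.\<close>

lemma rename_vars_comp: "rename_vars f (rename_vars h P) = rename_vars (f \<circ> h) P"
  by (simp add: rename_vars_def image_image image_comp)

lemma is_rpoly_rename_mod: "0 < m \<Longrightarrow> is_rpoly m (rename_vars (\<lambda>k. k mod m) P)"
  by (auto simp: is_rpoly_def rename_vars_def)

lemma rotation_symmetric_rename_mod: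
  assumes "m dvd n" and "rotation_symmetric n P"
  shows "rotation_symmetric m (rename_vars (\<lambda>k. k mod m) P)"
proof -
  have "(\<lambda>j. (j + 1) mod m) \<circ> (\<lambda>k. k mod m) = (\<lambda>k. k mod m) \<circ> (\<lambda>j. (j + 1) mod n)"
    by (simp add: fun_eq_iff mod_mod_cancel[OF assms(1)] mod_Suc_eq)
  then have "rename_vars (\<lambda>j. (j + 1) mod m) (rename_vars (\<lambda>k. k mod m) P)
      = rename_vars (\<lambda>k. k mod m) (rename_vars (\<lambda>j. (j + 1) mod n) P)"
    by (simp only: rename_vars_comp)
  also have "\<dots> = rename_vars (\<lambda>k. k mod m) P"
    using assms(2) unfolding rotation_symmetric_def by (rule arg_cong)
  finally show ?thesis unfolding rotation_symmetric_def .
qed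

text \<open>A lift of \<open>T \<subseteq> {0..<m}\<close> chooses one of j, j + m for every \<open>j \<in> T\<close>;
  the lifts of T are the monomials of the product of x_j + x_(j+m) over j in T.\<close>
definition lifts :: "nat \<Rightarrow> nat set \<Rightarrow> nat set set" where
  "lifts m T = {S. S \<subseteq> {..<2 * m} \<and> bij_betw (\<lambda>k. k mod m) S T}"

lemma less_double_mod_cases:
  fixes s m :: nat
  assumes "s < 2 * m"
  shows "s = s mod m \<or> s = s mod m + m"
proof (cases "s < m")
  case False
  then have "s mod m = s - m" using assms by (simp add: le_mod_geq)
  then show ?thesis using False by simp
qed simp

lemma in_lifts_image_mod:
  assumes "S \<subseteq> {..<2 * m}" and "\<forall>j<m. \<not> (j \<in> S \<and> j + m \<in> S)"
  shows "S \<in> lifts m ((\<lambda>k. k mod m) ` S)"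
proof -
  have "s = t" if "s \<in> S" "t \<in> S" "s mod m = t mod m" for s t
  proof -
    define j where "j = s mod m"
    have "s < 2 * m" "t < 2 * m" using that assms(1) by auto
    then have "j < m" by (simp add: j_def)
    have "s \<in> {j, j + m}" using less_double_mod_cases[OF \<open>s < 2 * m\<close>] j_def by auto
    moreover have "t \<in> {j, j + m}"
      using less_double_mod_cases[OF \<open>t < 2 * m\<close>] j_def that(3) by auto
    ultimately show ?thesis using that assms(2) \<open>j < m\<close> by blast
  qed
  then show ?thesis using assms(1) by (simp add: lifts_def bij_betw_def inj_on_def)
qed

lemma transpose_image_in_lifts:
  assumes "j < m" and "S \<in> lifts m T"
  shows "transpose j (j + m) ` S \<in> lifts m T"
proof -
  have mod_eq: "transpose j (j + m) k mod m = k mod m" for k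
    by (cases "k = j"; cases "k = j + m") simp_all
  have bound: "transpose j (j + m) k < 2 * m" if "k < 2 * m" for k
    using that assms(1) by (cases "k = j"; cases "k = j + m") simp_all
  have "bij_betw ((\<lambda>k. k mod m) \<circ> transpose j (j + m)) S T"
    using assms(2) by (simp add: lifts_def comp_def mod_eq)
  then have "bij_betw (\<lambda>k. k mod m) (transpose j (j + m) ` S) T"
    by (subst bij_betw_comp_iff[OF inj_on_imp_bij_betw[OF inj_on_transpose]])
  moreover have "transpose j (j + m) ` S \<subseteq> {..<2 * m}"
    using assms(2) bound by (auto simp: lifts_def)
  ultimately show ?thesis by (simp add: lifts_def)
qed

lemma lifts_eq_if_subset:
  assumes "S \<in> lifts m T" and "S' \<in> lifts m T" and "S \<subseteq> S'"
  shows "S = S'"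
proof
  have S: "bij_betw (\<lambda>k. k mod m) S T" and S': "bij_betw (\<lambda>k. k mod m) S' T"
    using assms(1,2) by (simp_all add: lifts_def)
  show "S' \<subseteq> S"
  proof
    fix i assume "i \<in> S'"
    then have "i mod m \<in> (\<lambda>k. k mod m) ` S"
      using bij_betw_apply[OF S'] bij_betw_imp_surj_on[OF S] by simp
    then obtain s where "s \<in> S" and "i mod m = s mod m" by blast
    with \<open>i \<in> S'\<close> assms(3) S' have "s = i"
      by (metis bij_betw_imp_inj_on inj_onD subsetD)
    with \<open>s \<in> S\<close> show "i \<in> S" by simp
  qed
qed (fact assms(3))

lemma lifts_finite: "finite (lifts m T)"
  by (rule finite_subset[of _ "Pow {..<2 * m}"]) (auto simp: lifts_def)

lemma lifts_subset_if_transpose_closed: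
  assumes closed: "\<forall>j<m. \<forall>S\<in>g. transpose j (j + m) ` S \<in> g"
    and "S \<in> g" and "S \<in> lifts m T"
  shows "lifts m T \<subseteq> g"
proof
  fix S' assume S': "S' \<in> lifts m T"
  show "S' \<in> g" using assms(2,3)
  proof (induction "card (S - S')" arbitrary: S rule: less_induct)
    case less
    show ?case
    proof (cases "S \<subseteq> S'")
      case True
      then show ?thesis using lifts_eq_if_subset less.prems S' by metis
    next
      case False
      then obtain s where s: "s \<in> S" "s \<notin> S'" by blast
      have S: "S \<subseteq> {..<2 * m}" "bij_betw (\<lambda>k. k mod m) S T"
        using less.prems(2) by (simp_all add: lifts_def)
      define j where "j = s mod m"
      have "s < 2 * m" using S(1) s(1) by auto
      then have "j < m" by (simp add: j_def)
      have "j \<in> T" using bij_betw_apply[OF S(2) s(1)] by (simp add: j_def)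
      then obtain s' where s': "s' \<in> S'" "s' mod m = j"
        using S' by (auto simp: lifts_def bij_betw_def)
      have "s' < 2 * m" using S' s'(1) by (auto simp: lifts_def)
      then have "s \<in> {j, j + m}" "s' \<in> {j, j + m}" "s \<noteq> s'"
        using less_double_mod_cases[OF \<open>s < 2 * m\<close>] less_double_mod_cases[OF \<open>s' < 2 * m\<close>] s s' j_def
        by auto
      then have "transpose j (j + m) s = s'" by auto
      define S'' where "S'' = transpose j (j + m) ` S"
      have "S'' \<in> g" using closed \<open>j < m\<close> less.prems(1) by (simp add: S''_def)
      have "S'' \<in> lifts m T"
        using transpose_image_in_lifts[OF \<open>j < m\<close> less.prems(2)] by (simp add: S''_def)
      have "S'' - S' \<subseteq> (S - S') - {s}"
      proof
        fix y assume y: "y \<in> S'' - S'"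
        then obtain z where z: "z \<in> S" "y = transpose j (j + m) z" by (auto simp: S''_def)
        then have "z \<noteq> s" using y \<open>transpose j (j + m) s = s'\<close> s'(1) by auto
        then have "z mod m \<noteq> j"
          using z(1) s(1) S(2) by (auto simp: j_def bij_betw_def inj_on_def)
        then have "z \<noteq> j" "z \<noteq> j + m" using \<open>j < m\<close> by auto
        then have "y = z" using z(2) by simp
        with y z(1) \<open>z \<noteq> s\<close> show "y \<in> (S - S') - {s}" by simp
      qed
      have "finite S" using S(1) finite_subset by blast
      with \<open>S'' - S' \<subseteq> (S - S') - {s}\<close> have "card (S'' - S') \<le> card ((S - S') - {s})"
        by (simp add: card_mono)
      also have "\<dots> < card (S - S')"
        using s \<open>finite S\<close> by (intro card_Diff1_less) auto
      finally have "card (S'' - S') < card (S - S')" .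
      then show ?thesis using \<open>S'' \<in> g\<close> \<open>S'' \<in> lifts m T\<close> by (rule less.hyps)
    qed
  qed
qed

lemma image_in_lifts:
  assumes "T \<subseteq> {..<m}" and "\<forall>j\<in>T. f j \<in> {j, j + m}"
  shows "f ` T \<in> lifts m T"
proof -
  have f: "f j mod m = j \<and> f j < 2 * m" if "j \<in> T" for j
  proof -
    have "j < m" using that assms(1) by auto
    then show ?thesis using that assms(2) by auto
  qed
  then have "bij_betw (\<lambda>k. k mod m) (f ` T) T"
    by (intro bij_betw_byWitness[where f' = f]) auto
  moreover have "f ` T \<subseteq> {..<2 * m}" using f by auto
  ultimately show ?thesis by (simp add: lifts_def)
qed

lemma inv_into_mod_in_lift:
  assumes "S \<in> lifts m T" and "j \<in> T"
  shows "inv_into S (\<lambda>k. k mod m) j \<in> S \<inter> {j, j + m}"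
proof -
  define s where "s = inv_into S (\<lambda>k. k mod m) j"
  have bij: "bij_betw (\<lambda>k. k mod m) S T" using assms(1) by (simp add: lifts_def)
  have "s \<in> S" using bij_betw_apply[OF bij_betw_inv_into[OF bij] assms(2)] by (simp add: s_def)
  moreover have "s mod m = j"
    using bij_betw_imp_surj_on[OF bij] assms(2) f_inv_into_f[of j "\<lambda>k. k mod m" S]
    by (simp add: s_def)
  moreover have "s < 2 * m" using assms(1) \<open>s \<in> S\<close> by (auto simp: lifts_def)
  ultimately show ?thesis using less_double_mod_cases[of s m] by (auto simp: s_def)
qed

lemma bij_betw_PiE_lifts:
  assumes "T \<subseteq> {..<m}"
  shows "bij_betw (\<lambda>f. f ` T) (\<Pi>\<^sub>E j\<in>T. {i \<in> {j, j + m}. x i}) {S \<in> lifts m T. \<forall>i\<in>S. x i}"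
    (is "bij_betw _ ?F ?L")
proof (rule bij_betw_byWitness[where f' = "\<lambda>S. restrict (inv_into S (\<lambda>k. k mod m)) T"])
  have lift: "f ` T \<in> lifts m T" and "\<forall>i\<in>f ` T. x i" if "f \<in> ?F" for f
    using image_in_lifts[OF assms] PiE_mem[OF that] by auto
  then show "(\<lambda>f. f ` T) ` ?F \<subseteq> ?L" by auto
  show "\<forall>f\<in>?F. restrict (inv_into (f ` T) (\<lambda>k. k mod m)) T = f"
  proof
    fix f assume f: "f \<in> ?F"
    have "inv_into (f ` T) (\<lambda>k. k mod m) j = f j" if "j \<in> T" for j
    proof (rule inv_into_f_eq)
      show "inj_on (\<lambda>k. k mod m) (f ` T)" using lift[OF f] by (simp add: lifts_def bij_betw_def)
      have "j < m" "f j \<in> {j, j + m}" using that assms PiE_mem[OF f that] by auto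
      then show "f j mod m = j" by auto
    qed (use that in simp)
    then show "restrict (inv_into (f ` T) (\<lambda>k. k mod m)) T = f"
      using f by (intro extensionalityI[of _ T]) (auto simp: PiE_iff)
  qed
  show "\<forall>S\<in>?L. restrict (inv_into S (\<lambda>k. k mod m)) T ` T = S"
    by (auto simp: lifts_def bij_betw_inv_into bij_betw_imp_surj_on)
  show "(\<lambda>S. restrict (inv_into S (\<lambda>k. k mod m)) T) ` ?L \<subseteq> ?F"
    using inv_into_mod_in_lift by (fastforce simp: restrict_PiE_iff)
qed

lemma odd_card_lifts_iff:
  assumes "T \<subseteq> {..<m}"
  shows "odd (card {S \<in> lifts m T. \<forall>i\<in>S. x i}) \<longleftrightarrow> (\<forall>j\<in>T. x j \<noteq> x (j + m))"
proof -
  have "finite T" using assms finite_subset by blast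
  have "card {S \<in> lifts m T. \<forall>i\<in>S. x i} = card (\<Pi>\<^sub>E j\<in>T. {i \<in> {j, j + m}. x i})"
    using bij_betw_same_card[OF bij_betw_PiE_lifts[OF assms]] by (rule sym)
  also have "\<dots> = (\<Prod>j\<in>T. card {i \<in> {j, j + m}. x i})"
    using \<open>finite T\<close> by (rule card_PiE)
  finally have card_eq: "card {S \<in> lifts m T. \<forall>i\<in>S. x i} = (\<Prod>j\<in>T. card {i \<in> {j, j + m}. x i})" .
  have "odd (card {i \<in> {j, j + m}. x i}) \<longleftrightarrow> x j \<noteq> x (j + m)" if "j \<in> T" for j
  proof -
    have "j \<noteq> j + m" using that assms by auto
    moreover have "{i \<in> {j, j + m}. x i}
        = (if x j then {j} else {}) \<union> (if x (j + m) then {j + m} else {})"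
      by auto
    ultimately show ?thesis by simp
  qed
  with card_eq show ?thesis using \<open>finite T\<close> by (simp add: even_prod_iff)
qed

lemma fiber_eq_lifts_if_transpose_closed:
  assumes "is_rpoly (2 * m) g"
    and closed: "\<forall>j<m. \<forall>S\<in>g. transpose j (j + m) ` S \<in> g"
    and no_pair: "\<forall>j<m. \<forall>S\<in>g. \<not> (j \<in> S \<and> j + m \<in> S)"
    and "T \<in> rename_vars (\<lambda>k. k mod m) g"
  shows "{S \<in> g. (\<lambda>k. k mod m) ` S = T} = lifts m T"
proof
  have lift: "S \<in> lifts m ((\<lambda>k. k mod m) ` S)" if "S \<in> g" for S
    using that assms(1) no_pair by (intro in_lifts_image_mod) (auto simp: is_rpoly_def atLeast0LessThan)
  then show "{S \<in> g. (\<lambda>k. k mod m) ` S = T} \<subseteq> lifts m T" by auto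
  obtain S where "S \<in> g" and "T = (\<lambda>k. k mod m) ` S"
    using assms(4) by (auto simp: rename_vars_def)
  then have "lifts m T \<subseteq> g" using lifts_subset_if_transpose_closed[OF closed] lift by blast
  then show "lifts m T \<subseteq> {S \<in> g. (\<lambda>k. k mod m) ` S = T}"
    by (auto simp: lifts_def bij_betw_def)
qed

lemma anf_eval_rename_mod:
  assumes "is_rpoly (2 * m) g"
    and "\<forall>j<m. \<forall>S\<in>g. transpose j (j + m) ` S \<in> g"
    and "\<forall>j<m. \<forall>S\<in>g. \<not> (j \<in> S \<and> j + m \<in> S)"
  shows "anf_eval g x = anf_eval (rename_vars (\<lambda>k. k mod m) g) (\<lambda>i. x i \<noteq> x (i + m))"
proof -
  define \<gamma> where "\<gamma> = rename_vars (\<lambda>k. k mod m) g"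
  define true_lifts where "true_lifts T = {S \<in> lifts m T. \<forall>i\<in>S. x i}" for T
  have "finite g"
    using assms(1) by (auto simp: is_rpoly_def intro: finite_subset[of _ "Pow {0..<2 * m}"])
  then have "finite \<gamma>" by (simp add: \<gamma>_def rename_vars_def)
  have "{S \<in> g. \<forall>i\<in>S. x i} = (\<Union>T\<in>\<gamma>. {S \<in> {S \<in> g. (\<lambda>k. k mod m) ` S = T}. \<forall>i\<in>S. x i})"
    by (auto simp: \<gamma>_def rename_vars_def)
  also have "\<dots> = (\<Union>T\<in>\<gamma>. true_lifts T)"
    using fiber_eq_lifts_if_transpose_closed[OF assms] by (simp add: \<gamma>_def true_lifts_def)
  moreover have "finite (true_lifts T)" for T
    using lifts_finite by (simp add: true_lifts_def)
  moreover have "true_lifts T \<inter> true_lifts T' = {}" if "T \<noteq> T'" for T T'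
    using that by (auto simp: true_lifts_def lifts_def bij_betw_def)
  ultimately have "card {S \<in> g. \<forall>i\<in>S. x i} = (\<Sum>T\<in>\<gamma>. card (true_lifts T))"
    using \<open>finite \<gamma>\<close> by (simp add: card_UN_disjoint)
  then have "anf_eval g x \<longleftrightarrow> odd (card {T \<in> \<gamma>. odd (card (true_lifts T))})"
    using \<open>finite \<gamma>\<close> by (simp add: anf_eval_def even_sum_iff)
  also have "{T \<in> \<gamma>. odd (card (true_lifts T))} = {T \<in> \<gamma>. \<forall>j\<in>T. x j \<noteq> x (j + m)}"
  proof (intro Collect_cong conj_cong refl)
    fix T assume "T \<in> \<gamma>"
    then obtain S where "S \<in> g" and T: "T = (\<lambda>k. k mod m) ` S" by (auto simp: \<gamma>_def rename_vars_def)
    have "s mod m < m" if "s \<in> S" for s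
    proof -
      have "s < 2 * m" using that \<open>S \<in> g\<close> assms(1) unfolding is_rpoly_def
        by (meson atLeastLessThan_iff subsetD)
      then show ?thesis by simp
    qed
    then have "T \<subseteq> {..<m}" using T by auto
    then show "odd (card (true_lifts T)) \<longleftrightarrow> (\<forall>j\<in>T. x j \<noteq> x (j + m))"
      unfolding true_lifts_def by (rule odd_card_lifts_iff)
  qed
  finally show ?thesis by (simp add: anf_eval_def \<gamma>_def)
qed

theorem lemma1:
  fixes m n :: nat and g :: rpoly
  assumes "m \<ge> 1" and "n = 2 * m"
    and "is_rpoly n g"
    and "\<forall>i<m. rename_vars (transpose i (i + m)) g = g"
    and "\<forall>i<m. \<forall>S\<in>g. \<not> (i \<in> S \<and> i + m \<in> S)"
    and "rotation_symmetric n g"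
  shows "\<exists>\<gamma>. is_rpoly m \<gamma> \<and> rotation_symmetric m \<gamma> \<and>
           (\<forall>x. anf_eval g x = anf_eval \<gamma> (\<lambda>i. x i \<noteq> x (i + m)))"
proof (intro exI conjI allI)
  have closed: "\<forall>j<m. \<forall>S\<in>g. transpose j (j + m) ` S \<in> g"
    using assms(4) unfolding rename_vars_def by blast
  show "is_rpoly m (rename_vars (\<lambda>k. k mod m) g)"
    using assms(1) by (simp add: is_rpoly_rename_mod)
  show "rotation_symmetric m (rename_vars (\<lambda>k. k mod m) g)"
    using assms(2,6) by (intro rotation_symmetric_rename_mod) simp_all
  show "anf_eval g x = anf_eval (rename_vars (\<lambda>k. k mod m) g) (\<lambda>i. x i \<noteq> x (i + m))" for x
    using assms(2,3,5) closed by (intro anf_eval_rename_mod) simp_all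
qed

end
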